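(* Assume the cell is $1$-controllable and let $\theta\in\partial D$. Then there exists an admissible path starting at $\theta$ and ending in $\partial\Gamma_{\rm L}$; likewise there exists an admissible path from $\theta$ to $\partial\Gamma_{\rm R}$.
   Context: Cell geometry. Let $\Gamma_{\rm box}\subset\mathbb{R}^2$ be a bounded connected closed domain such that $(x,y)\in\Gamma_{\rm box}$ implies $x\in[0,L]$. Its boundary is $\partial\Gamma_{\rm box}=\partial\Gamma_{\rm L}\cup\partial\Gamma_{\rm R}\cup\bigcup_{k=1}^b\partial\Gamma_k$, where $\partial\Gamma_{\rm L}=\{(0,y):y\in[-a,a]\}$ and $\partial\Gamma_{\rm R}=\{(L,y):y\in[-a,a]\}$ are the two "openings" ($a>0$), and each $\partial\Gamma_k$ is an arc of a circle $C_k$ with center $c_k$, the arcs being oriented so that $\partial\Gamma_{\rm box}$ is everywhere dispersing. In the interior of $\Gamma_{\rm box}$ lies a closed disk $D$ of center $c=(L/2,0)$ and radius $r$ with $\partial D\cap\partial\Gamma_{\rm box}=\emptyset$, and for every $z\in\partial\Gamma_{\rm box}$ the segment $[c,z]$ meets $\partial\Gamma_{\rm box}$ only at $z$. The cell is $\Gamma=\Gamma_{\rm box}\setminus D$; its corners $\partial\Gamma^*$ are the points where two boundary pieces meet. Illumination and 1-controllability. For $k\in\{1,\dots,b\}$, let $I_k\subset\partial D$ be the largest open connected set of points $\theta\in\partial D$ such that a straight line leaving $\theta$ in some direction $\alpha_k(\theta)$ returns to $\theta$ after exactly one (specular) reflection, occurring on $\partial\Gamma_k$; equivalently, $I_k$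 is the part of $\partial D$ illuminated by light emitted from $c_k$ passing only through the arc $\partial\Gamma_k$ (and $\alpha_k(\theta)$ points from $\theta$ towards $c_k$). The cell is $1$-controllable if $\bigcup_{k=1}^b I_k=\partial D$. Admissible path. A curve $\gamma:[0,1]\to\Gamma$, continuous and piecewise differentiable on $(0,1)$, is admissible if: (1) it consists of finitely many straight segments meeting at $\partial\Gamma=\partial\Gamma_{\rm box}\cup\partial D$; (2) at each meeting point on $\partial\Gamma_{\rm box}$ the incoming and outgoing angles are equal (specular reflection); (3) only $\gamma(0)$ and $\gamma(1)$ may lie in $\partial\Gamma_{\rm L}\cup\partial\Gamma_{\rm R}$; (4) $\gamma$ never meets a corner of $\partial\Gamma^*$; (5) $\gamma$ is nowhere tangent to $\partial D$. No reflection law is required at meeting points on $\partial D$. *)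

theory Defs
  imports "HOL-Analysis.Analysis"
begin

text \<open>Points of the plane are complex numbers (x,y) = Complex x y.
 Data of a cell: length L, half-opening a, number b of arcs,
 the box Gbox, arcs wall k (k = 1..b) lying on circles with centres cen k and radii rad k,
 and the radius r of the central disk D = cball (ctr L) r.\<close>

definition opening_L :: "real \<Rightarrow> complex set" where
  "opening_L a = closed_segment (Complex 0 (-a)) (Complex 0 a)"

definition opening_R :: "real \<Rightarrow> real \<Rightarrow> complex set" where
  "opening_R L a = closed_segment (Complex L (-a)) (Complex L a)"

definition ctr :: "real \<Rightarrow> complex" where
  "ctr L = Complex (L/2) 0"

text \<open>Boundary pieces: index 0 is the left opening, index b+1 the right opening,
  indices 1..b are the arcs.\<close>
definition piece :: "real \<Rightarrow> real \<Rightarrow> nat \<Rightarrow> (nat \<Rightarrow> complex set) \<Rightarrow> nat \<Rightarrow> complex set" where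
  "piece L a b wall i = (if i = 0 then opening_L a else if i = Suc b then opening_R L a else wall i)"

definition corners :: "real \<Rightarrow> real \<Rightarrow> nat \<Rightarrow> (nat \<Rightarrow> complex set) \<Rightarrow> complex set" where
  "corners L a b wall = {z. \<exists>i\<in>{0..Suc b}. \<exists>j\<in>{0..Suc b}. i \<noteq> j \<and>
      z \<in> piece L a b wall i \<and> z \<in> piece L a b wall j}"

text \<open>The cell (including the boundary circle of D) and its boundary.\<close>
definition cell :: "complex set \<Rightarrow> real \<Rightarrow> real \<Rightarrow> complex set" where
  "cell Gbox L r = Gbox - ball (ctr L) r"

definition cell_boundary :: "complex set \<Rightarrow> real \<Rightarrow> real \<Rightarrow> complex set" where
  "cell_boundary Gbox L r = frontier Gbox \<union> sphere (ctr L) r"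

definition cell_geometry ::
  "real \<Rightarrow> real \<Rightarrow> nat \<Rightarrow> complex set \<Rightarrow> (nat \<Rightarrow> complex set) \<Rightarrow> (nat \<Rightarrow> complex)
     \<Rightarrow> (nat \<Rightarrow> real) \<Rightarrow> real \<Rightarrow> bool" where
  "cell_geometry L a b Gbox wall cen rad r \<longleftrightarrow>
     0 < L \<and> 0 < a \<and> 0 < r \<and>
     bounded Gbox \<and> closed Gbox \<and> connected Gbox \<and> closure (interior Gbox) = Gbox \<and>
     (\<forall>z\<in>Gbox. 0 \<le> Re z \<and> Re z \<le> L) \<and>
     frontier Gbox = opening_L a \<union> opening_R L a \<union> (\<Union>k\<in>{1..b}. wall k) \<and>
     (\<forall>k\<in>{1..b}. 0 < rad k \<and> wall k \<subseteq> sphere (cen k) (rad k) \<and>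
        compact (wall k) \<and> connected (wall k) \<and> \<not> (\<exists>p. wall k \<subseteq> {p}) \<and>
        Gbox \<inter> ball (cen k) (rad k) = {}) \<and>
     cball (ctr L) r \<subseteq> interior Gbox \<and>
     (\<forall>z\<in>frontier Gbox. closed_segment (ctr L) z \<inter> frontier Gbox = {z})"

text \<open>Points of the circle boundary of D from which the ray towards cen k hits the
  wall k first (at a non-corner point p, which then reflects it straight back).\<close>
definition illuminated ::
  "real \<Rightarrow> real \<Rightarrow> nat \<Rightarrow> complex set \<Rightarrow> (nat \<Rightarrow> complex set) \<Rightarrow> (nat \<Rightarrow> complex)
     \<Rightarrow> real \<Rightarrow> nat \<Rightarrow> complex set" where
  "illuminated L a b Gbox wall cen r k =
     {\<theta> \<in> sphere (ctr L) r. \<exists>p\<in>wall k. p \<notin> corners L a b wall \<and>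
        p \<in> open_segment \<theta> (cen k) \<and>
        open_segment \<theta> p \<inter> (frontier Gbox \<union> cball (ctr L) r) = {}}"

text \<open>I_k: the open (in the circle) connected part of the illuminated set, taken as
  the union of all relatively open connected subsets of it.\<close>
definition I_set ::
  "real \<Rightarrow> real \<Rightarrow> nat \<Rightarrow> complex set \<Rightarrow> (nat \<Rightarrow> complex set) \<Rightarrow> (nat \<Rightarrow> complex)
     \<Rightarrow> real \<Rightarrow> nat \<Rightarrow> complex set" where
  "I_set L a b Gbox wall cen r k =
     \<Union>{U. openin (top_of_set (sphere (ctr L) r)) U \<and> connected U \<and>
          U \<subseteq> illuminated L a b Gbox wall cen r k}"

definition one_controllable ::
  "real \<Rightarrow> real \<Rightarrow> nat \<Rightarrow> complex set \<Rightarrow> (nat \<Rightarrow> complex set) \<Rightarrow> (nat \<Rightarrow> complex)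
     \<Rightarrow> real \<Rightarrow> bool" where
  "one_controllable L a b Gbox wall cen r \<longleftrightarrow>
     (\<Union>k\<in>{1..b}. I_set L a b Gbox wall cen r k) = sphere (ctr L) r"

definition reflect_dir :: "complex \<Rightarrow> complex \<Rightarrow> complex" where
  "reflect_dir n d = d - (2 * (d \<bullet> n) / (n \<bullet> n)) *\<^sub>R n"

text \<open>An admissible path, given by its list of vertices ps = [gamma(0), ..., gamma(1)];
  the curve is the polygonal line through these vertices.\<close>
definition admissible_path ::
  "real \<Rightarrow> real \<Rightarrow> nat \<Rightarrow> complex set \<Rightarrow> (nat \<Rightarrow> complex set) \<Rightarrow> (nat \<Rightarrow> complex)
     \<Rightarrow> real \<Rightarrow> complex list \<Rightarrow> bool" where
  "admissible_path L a b Gbox wall cen r ps \<longleftrightarrow>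
     2 \<le> length ps \<and>
     (\<forall>i < length ps - 1. ps!i \<noteq> ps!(i+1) \<and>
         closed_segment (ps!i) (ps!(i+1)) \<subseteq> cell Gbox L r) \<and>
     (\<forall>i. 0 < i \<and> i < length ps - 1 \<longrightarrow> ps!i \<in> cell_boundary Gbox L r) \<and>
     (\<forall>i. 0 < i \<and> i < length ps - 1 \<longrightarrow> (\<forall>k\<in>{1..b}. ps!i \<in> wall k \<longrightarrow>
         sgn (ps!(i+1) - ps!i) = sgn (reflect_dir (ps!i - cen k) (ps!i - ps!(i-1))))) \<and>
     (\<forall>i < length ps - 1. \<forall>z\<in>closed_segment (ps!i) (ps!(i+1)).
         z \<in> opening_L a \<union> opening_R L a \<longrightarrow>
           (i = 0 \<and> z = ps!0) \<or> (i = length ps - 2 \<and> z = ps!(length ps - 1))) \<and>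
     (\<forall>i < length ps - 1. closed_segment (ps!i) (ps!(i+1)) \<inter> corners L a b wall = {}) \<and>
     (\<forall>i < length ps - 1. \<forall>q\<in>closed_segment (ps!i) (ps!(i+1)) \<inter> sphere (ctr L) r.
         (ps!(i+1) - ps!i) \<bullet> (q - ctr L) \<noteq> 0)"

end

theory Submission
  imports Defs
begin

text \<open>
  Call t' bounce-reachable from t, both on the circle bounding D, if a straight segment from t
  hits the outer boundary at a regular wall point q and is reflected there to t'. Prepending
  such a bounce to an admissible path from t' gives one from t, and every point of the circle
  is joined to each opening by a radial segment ending at a regular point of that opening. As
  the circle is connected, it remains to show that all points near a given t0 are mutually
  bounce-reachable.

  By 1-controllability t0 lies in some I_k, an open set of illuminated points. Openness forces
  the ray from t0 towards the centre of C_k to cross the circle transversally, and this ray is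
  reflected straight back where it hits C_k. For t1, t2 near t0, let the aim point run along C_k
  from the radial projection of t1 to that of t2: the ray from t1 reflected there starts on one
  side of t2 and ends on the other, so by the intermediate value theorem some reflected ray
  passes through t2. Continuity and compactness keep both segments clear of the rest of the
  boundary.
\<close>

definition cross :: "complex \<Rightarrow> complex \<Rightarrow> real" where
  "cross u v = Re u * Im v - Im u * Re v"

lemma cross_simps:
  "cross (u - v) w = cross u w - cross v w"
  "cross u (v - w) = cross u v - cross u w"
  "cross (u + v) w = cross u w + cross v w"
  "cross u (v + w) = cross u v + cross u w"
  "cross (x *\<^sub>R u) v = x * cross u v"
  "cross u (x *\<^sub>R v) = x * cross u v"
  "cross u u = 0"
  by (auto simp: cross_def algebra_simps)

lemma continuous_on_cross [continuous_intros]: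
  "continuous_on S f \<Longrightarrow> continuous_on S g \<Longrightarrow> continuous_on S (\<lambda>x. cross (f x) (g x))"
  unfolding cross_def by (intro continuous_intros)

lemma cross_reflect_dir: "cross (reflect_dir n d) n = cross d n"
  by (simp add: reflect_dir_def cross_simps)

lemma reflect_dir_scaleR_self:
  assumes "n \<noteq> 0"
  shows "reflect_dir n (m *\<^sub>R n) = - (m *\<^sub>R n)"
proof -
  have "2 * ((m *\<^sub>R n) \<bullet> n) / (n \<bullet> n) = 2 * m" using assms by simp
  then have "reflect_dir n (m *\<^sub>R n) = m *\<^sub>R n - (2 * m) *\<^sub>R n" by (simp add: reflect_dir_def)
  then show ?thesis by (simp add: scaleR_left_diff_distrib[symmetric])
qed

lemma sgn_eq_if_cross_eq_0:
  assumes "cross v w = 0" "v \<bullet> w > 0"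
  shows "sgn w = sgn v"
proof -
  have v0: "v \<noteq> 0" using assms(2) by auto
  define l where "l = (v \<bullet> w) / (norm v)^2"
  have "(Re v)^2 + (Im v)^2 \<noteq> 0" using v0 by (simp add: complex_eq_iff)
  then have "w = l *\<^sub>R v"
    using assms(1) unfolding l_def cmod_power2
    by (simp add: cross_def complex_eq_iff inner_complex_def field_simps power2_eq_square)
  moreover have "l > 0" using assms(2) v0 by (simp add: l_def)
  ultimately show ?thesis by (simp add: sgn_scaleR)
qed

definition radial_proj :: "'a::real_normed_vector \<Rightarrow> real \<Rightarrow> 'a \<Rightarrow> 'a" where
  "radial_proj p R x = p + (R / norm (x - p)) *\<^sub>R (x - p)"

lemma radial_proj_in_sphere:
  assumes "x \<noteq> p" "0 \<le> R"
  shows "radial_proj p R x \<in> sphere p R"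
  using assms by (simp add: radial_proj_def dist_norm)

lemma continuous_on_radial_proj [continuous_intros]:
  "continuous_on S f \<Longrightarrow> (\<And>x. x \<in> S \<Longrightarrow> f x \<noteq> p) \<Longrightarrow>
     continuous_on S (\<lambda>x. radial_proj p R (f x))"
  unfolding radial_proj_def by (intro continuous_intros) auto

lemma isCont_radial_proj: "x \<noteq> p \<Longrightarrow> isCont (radial_proj p R) x"
  unfolding radial_proj_def[abs_def] by (intro continuous_intros) auto

lemma radial_proj_of_sphere:
  assumes "x \<in> sphere p R" "0 < R"
  shows "radial_proj p R x = x"
proof -
  have "norm (x - p) = R" using assms(1) by (simp add: dist_norm norm_minus_commute)
  then show ?thesis using assms(2) by (simp add: radial_proj_def)
qed

lemma radial_proj_in_closed_segment:
  assumes "0 \<le> R" "R \<le> norm (x - p)"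
  shows "radial_proj p R x \<in> closed_segment p x"
proof (cases "x = p")
  case False
  then have "R / norm (x - p) \<le> 1" using assms(2) by simp
  then show ?thesis unfolding in_segment using assms(1)
    by (intro exI[of _ "R / norm (x - p)"]) (auto simp: radial_proj_def algebra_simps)
qed (simp add: radial_proj_def)

lemma radial_proj_eq_if_in_segment:
  assumes "q \<in> closed_segment x p" "dist p q = R" "x \<noteq> p"
  shows "q = radial_proj p R x"
proof -
  obtain u where u: "0 \<le> u" "u \<le> 1" "q = (1 - u) *\<^sub>R x + u *\<^sub>R p"
    using assms(1) by (auto simp: in_segment)
  have qp: "q - p = (1 - u) *\<^sub>R (x - p)" using u(3) by (simp add: algebra_simps)
  have "norm (q - p) = R" using assms(2) by (simp add: dist_norm norm_minus_commute)
  then have "R = (1 - u) * norm (x - p)" using u(2) by (simp add: qp)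
  then have "R / norm (x - p) = 1 - u" using assms(3) by simp
  have "q = p + (q - p)" by simp
  also have "\<dots> = radial_proj p R x" by (simp add: radial_proj_def qp \<open>R / norm (x - p) = 1 - u\<close>)
  finally show ?thesis .
qed

lemma radial_proj_minus_self:
  "radial_proj p R x - x = (1 - R / norm (x - p)) *\<^sub>R (p - x)"
  by (simp add: radial_proj_def algebra_simps)

lemma inner_radial_proj_pos:
  fixes p x :: "'a::real_inner"
  assumes "0 < R" "R < norm (x - p)"
  shows "(x - radial_proj p R x) \<bullet> (radial_proj p R x - p) > 0"
proof -
  define s where "s = R / norm (x - p)"
  have s: "0 < s" "s < 1" using assms by (auto simp: s_def divide_less_eq intro!: divide_pos_pos)
  have "x - radial_proj p R x = (1 - s) *\<^sub>R (x - p)" "radial_proj p R x - p = s *\<^sub>R (x - p)"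
    by (simp_all add: radial_proj_def s_def algebra_simps)
  then have "(x - radial_proj p R x) \<bullet> (radial_proj p R x - p) = (1 - s) * s * (norm (x - p))^2"
    by (simp add: power2_norm_eq_inner)
  moreover have "0 < norm (x - p)" using assms by linarith
  ultimately show ?thesis using s by (simp add: zero_less_mult_iff)
qed

lemma reflect_dir_radial_proj:
  assumes "0 < R" "R < norm (x - p)"
  defines "q \<equiv> radial_proj p R x"
  shows "reflect_dir (q - p) (q - x) = x - q"
proof -
  define s where "s = R / norm (x - p)"
  have s: "0 < s" "s < 1" using assms by (auto simp: s_def divide_less_eq intro!: divide_pos_pos)
  have qp: "q - p = s *\<^sub>R (x - p)" by (simp add: q_def radial_proj_def s_def)
  have "q - x = (s - 1) *\<^sub>R (x - p)" by (simp add: q_def radial_proj_def s_def algebra_simps)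
  then have qx: "q - x = ((s - 1) / s) *\<^sub>R (q - p)" using s by (simp add: qp)
  have "x \<noteq> p" using assms(1,2) by auto
  then have "q - p \<noteq> 0" unfolding qp using s by simp
  then have "reflect_dir (q - p) (q - x) = - (q - x)"
    unfolding qx by (rule reflect_dir_scaleR_self)
  then show ?thesis by simp
qed

lemma reflection_cross_sign_change:
  fixes p x y :: complex
  assumes R: "0 < R" "R < norm (x - p)" "R < norm (y - p)"
  defines "f \<equiv> \<lambda>q. cross (reflect_dir (q - p) (q - x)) (y - q)"
  shows "f (radial_proj p R x) * f (radial_proj p R y) \<le> 0"
proof -
  define A B where "A = x - p" and "B = y - p"
  define s1 s2 where "s1 = R / norm A" and "s2 = R / norm B"
  have s: "s1 < 1" "0 < s2" "s2 < 1" using R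
    by (auto simp: s1_def s2_def A_def B_def divide_less_eq intro!: divide_pos_pos)
  define q1 q2 where "q1 = radial_proj p R x" and "q2 = radial_proj p R y"
  have q1: "x - q1 = (1 - s1) *\<^sub>R A" "y - q1 = B - s1 *\<^sub>R A"
    by (simp_all add: q1_def radial_proj_def s1_def A_def B_def algebra_simps)
  have q2: "q2 - p = s2 *\<^sub>R B" "q2 - x = s2 *\<^sub>R B - A" "y - q2 = (1 - s2) *\<^sub>R B"
    by (simp_all add: q2_def radial_proj_def s2_def A_def B_def algebra_simps)
  have "f q1 = cross (x - q1) (y - q1)"
    unfolding f_def q1_def using reflect_dir_radial_proj[OF R(1,2)] by simp
  then have f1: "f q1 = (1 - s1) * cross A B" by (simp add: q1 cross_simps)
  have "cross (reflect_dir (q2 - p) (q2 - x)) (q2 - p) = cross (q2 - x) (q2 - p)"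
    by (rule cross_reflect_dir)
  then have "s2 * cross (reflect_dir (q2 - p) (q2 - x)) B = s2 * (- cross A B)"
    by (simp add: q2 cross_simps)
  then have "cross (reflect_dir (q2 - p) (q2 - x)) B = - cross A B"
    using s(2) by (metis mult_cancel_left less_irrefl)
  then have f2: "f q2 = - (1 - s2) * cross A B" unfolding f_def q2(3) cross_simps(6) by (simp add: algebra_simps)
  have "f q1 * f q2 = - ((1 - s1) * (1 - s2) * (cross A B)^2)"
    unfolding f1 f2 by (simp add: power2_eq_square algebra_simps)
  moreover have "0 \<le> (1 - s1) * (1 - s2) * (cross A B)^2" using s by simp
  ultimately show ?thesis by (simp add: q1_def q2_def)
qed

lemma exists_reflection_root:
  fixes \<gamma> :: "real \<Rightarrow> complex"
  assumes R: "0 < R" and \<gamma>: "continuous_on {0..1} \<gamma>" "\<gamma> 0 = t1" "\<gamma> 1 = t2"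
    and far: "\<And>s. s \<in> {0..1} \<Longrightarrow> R < norm (\<gamma> s - p)"
  defines "q \<equiv> \<lambda>s. radial_proj p R (\<gamma> s)"
  shows "\<exists>s\<in>{0..1}. cross (reflect_dir (q s - p) (q s - t1)) (t2 - q s) = 0"
proof -
  define F where "F = (\<lambda>s. cross (reflect_dir (q s - p) (q s - t1)) (t2 - q s))"
  have \<gamma>p: "\<gamma> s \<noteq> p" if "s \<in> {0..1}" for s using far[OF that] R by auto
  moreover have "q s \<noteq> p" if "s \<in> {0..1}" for s
    using radial_proj_in_sphere[OF \<gamma>p[OF that], of R] R by (auto simp: q_def)
  ultimately have "continuous_on {0..1} F"
    unfolding F_def q_def reflect_dir_def by (intro continuous_intros \<gamma>(1)) auto
  moreover have "F 0 * F 1 \<le> 0"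
    using reflection_cross_sign_change[where p = p and x = t1 and y = t2, OF R] far[of 0] far[of 1] \<gamma>(2,3)
    by (simp add: F_def q_def)
  ultimately obtain s where "0 \<le> s" "s \<le> 1" "F s = 0"
  proof (cases "F 0 \<le> 0 \<and> 0 \<le> F 1")
    case True
    then show ?thesis using IVT'[of F 0 0 1] \<open>continuous_on {0..1} F\<close> that by auto
  next
    case False
    then have "F 1 \<le> 0 \<and> 0 \<le> F 0" using \<open>F 0 * F 1 \<le> 0\<close> by (auto simp: mult_le_0_iff)
    then show ?thesis using IVT2'[of F 1 0 0] \<open>continuous_on {0..1} F\<close> that by auto
  qed
  then show ?thesis by (auto simp: F_def)
qed

lemma dist_radial_proj_le:
  fixes c w t0 :: "'a::real_normed_vector"
  assumes "t0 \<in> sphere c r" "w \<noteq> c"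
  shows "dist (radial_proj c r w) t0 \<le> 2 * dist w t0"
proof -
  have "norm (radial_proj c r w - w) = \<bar>r - norm (w - c)\<bar>"
  proof -
    have "radial_proj c r w - w = ((r - norm (w - c)) / norm (w - c)) *\<^sub>R (w - c)"
      using assms(2) by (simp add: radial_proj_def diff_divide_distrib scaleR_diff_left)
    then show ?thesis using assms(2) by simp
  qed
  also have "\<dots> \<le> dist w t0"
    using assms(1) norm_triangle_ineq3[of "w - c" "t0 - c"]
    by (simp add: dist_norm norm_minus_commute abs_minus_commute)
  finally show ?thesis
    using dist_triangle[of "radial_proj c r w" t0 w] by (simp add: dist_norm)
qed

lemma closed_segment_near:
  fixes x y x' y' :: "'a::real_normed_vector"
  assumes "w \<in> closed_segment x y" "dist x x' < d" "dist y y' < d"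
  obtains w' where "w' \<in> closed_segment x' y'" "dist w w' < d"
proof -
  obtain s where s: "0 \<le> s" "s \<le> 1" "w = (1 - s) *\<^sub>R x + s *\<^sub>R y"
    using assms(1) by (auto simp: in_segment)
  define w' where "w' = (1 - s) *\<^sub>R x' + s *\<^sub>R y'"
  have "w - w' = (1 - s) *\<^sub>R (x - x') + s *\<^sub>R (y - y')" by (simp add: s(3) w'_def algebra_simps)
  moreover have "(1 - s) *\<^sub>R (x - x') + s *\<^sub>R (y - y') \<in> ball 0 d"
    using assms(2,3) by (intro convexD_alt[OF convex_ball _ _ s(1,2)]) (simp_all add: dist_norm norm_minus_commute)
  ultimately have "dist w w' < d" by (simp only: dist_norm mem_ball_0)
  moreover have "w' \<in> closed_segment x' y'" using s(1,2) by (auto simp: w'_def in_segment)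
  ultimately show ?thesis using that by blast
qed

lemma radial_arc_near:
  fixes c t0 t1 t2 :: "'a::real_normed_vector"
  assumes t: "t0 \<in> sphere c r" "t1 \<in> sphere c r" "t2 \<in> sphere c r"
    and near: "dist t1 t0 < d" "dist t2 t0 < d" and d: "2 * d \<le> r"
  defines "\<gamma> \<equiv> \<lambda>s. radial_proj c r (linepath t1 t2 s)"
  shows "continuous_on {0..1} \<gamma>" "\<gamma> 0 = t1" "\<gamma> 1 = t2"
    and "\<And>s. s \<in> {0..1} \<Longrightarrow> \<gamma> s \<in> sphere c r"
      "\<And>s. s \<in> {0..1} \<Longrightarrow> dist (\<gamma> s) t0 < 2 * d"
proof -
  have r: "0 < r" using near(1) d zero_le_dist[of t1 t0] by linarith
  have "closed_segment t1 t2 \<subseteq> ball t0 d"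
    using near by (intro closed_segment_subset) (auto simp: dist_commute)
  then have seg: "dist (linepath t1 t2 s) t0 < d" if "s \<in> {0..1}" for s
    using linepath_in_path[OF that, of t1 t2] by (auto simp: dist_commute)
  have ne: "linepath t1 t2 s \<noteq> c" if "s \<in> {0..1}" for s
    using seg[OF that] d t(1) zero_le_dist[of c t0] by auto
  show "continuous_on {0..1} \<gamma>" unfolding \<gamma>_def using ne by (intro continuous_intros) auto
  show "\<gamma> 0 = t1" "\<gamma> 1 = t2"
    using t(2,3) r by (simp_all add: \<gamma>_def linepath_0' linepath_1' radial_proj_of_sphere)
  fix s :: real assume s: "s \<in> {0..1}"
  show "\<gamma> s \<in> sphere c r" unfolding \<gamma>_def using ne[OF s] r by (intro radial_proj_in_sphere) auto
  have "dist (\<gamma> s) t0 \<le> 2 * dist (linepath t1 t2 s) t0"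
    unfolding \<gamma>_def using t(1) ne[OF s] by (rule dist_radial_proj_le)
  then show "dist (\<gamma> s) t0 < 2 * d" using seg[OF s] by linarith
qed

lemma closed_segment_subset_if_frontier_inter:
  fixes x y :: "'a::euclidean_space"
  assumes x: "x \<in> S" and y: "y \<in> S" and F: "closed_segment x y \<inter> frontier S \<subseteq> {y}"
  shows "closed_segment x y \<subseteq> S"
proof
  fix w assume w: "w \<in> closed_segment x y"
  show "w \<in> S"
  proof (rule ccontr)
    assume nw: "w \<notin> S"
    have "closed_segment x w \<inter> frontier S \<noteq> {}"
      by (rule connected_Int_frontier) (use x nw in auto)
    then obtain f where f: "f \<in> closed_segment x w" "f \<in> frontier S" by auto
    have sub: "closed_segment x w \<subseteq> closed_segment x y"
      using w by (simp add: subset_closed_segment)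
    then have "f = y" using f F by auto
    with f have "closed_segment x y \<subseteq> closed_segment x w" by (simp add: subset_closed_segment)
    with sub have "closed_segment x y = closed_segment x w" by auto
    then have "{x, y} = {x, w}" by simp
    then have "w = y" by (metis doubleton_eq_iff)
    with y nw show False by simp
  qed
qed

lemma closed_segment_inter_cball_start:
  fixes x y p :: "'a::real_inner"
  assumes "dist p x = R" "(y - x) \<bullet> (x - p) > 0" "w \<in> closed_segment x y" "dist p w \<le> R"
  shows "w = x"
proof -
  obtain s where s: "0 \<le> s" "s \<le> 1" "w = (1 - s) *\<^sub>R x + s *\<^sub>R y"
    using assms(3) by (auto simp: in_segment)
  have wp: "w - p = (x - p) + s *\<^sub>R (y - x)" using s(3) by (simp add: algebra_simps)
  have "(norm (w - p))^2 = (norm (x - p))^2 + 2 * s * ((y - x) \<bullet> (x - p)) + s^2 * (norm (y - x))^2"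
    unfolding wp power2_norm_eq_inner
    by (simp add: inner_add_left inner_add_right inner_commute power2_eq_square algebra_simps)
  moreover have "norm (x - p) = R" "norm (w - p) \<le> R" using assms(1,4) by (auto simp: dist_norm norm_minus_commute)
  moreover have "R \<ge> 0" using assms(1) by auto
  ultimately have "2 * s * ((y - x) \<bullet> (x - p)) + s^2 * (norm (y - x))^2 \<le> 0"
    by (smt (verit, best) power_mono norm_ge_zero)
  moreover have "s^2 * (norm (y - x))^2 \<ge> 0" by simp
  ultimately have "s * ((y - x) \<bullet> (x - p)) \<le> 0" by linarith
  with s(1) assms(2) have "s = 0" by (smt (verit) mult_pos_pos)
  with s(3) show ?thesis by simp
qed

lemma open_segment_meets_ball:
  fixes t p c :: "'a::real_inner"
  assumes "t \<in> sphere c r" "(p - t) \<bullet> (t - c) < 0"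
  shows "open_segment t p \<inter> ball c r \<noteq> {}"
proof -
  define g m where "g = (p - t) \<bullet> (t - c)" and "m = (norm (p - t))^2"
  have "g < 0" using assms(2) by (simp add: g_def)
  have pt: "p \<noteq> t" using assms(2) by auto
  then have m0: "m > 0" by (simp add: m_def)
  define s where "s = min (1/2) (- g / m)"
  have s: "0 < s" "s < 1" "s \<le> - g / m" using assms(2) m0 by (auto simp: s_def g_def divide_neg_pos)
  then have sm: "s * m \<le> - g" using m0 by (simp add: field_simps)
  define w where "w = (1 - s) *\<^sub>R t + s *\<^sub>R p"
  have wc: "w - c = (t - c) + s *\<^sub>R (p - t)" by (simp add: w_def algebra_simps)
  have "(norm (w - c))^2 = (norm (t - c))^2 + s * (2 * g + s * m)"
    unfolding wc power2_norm_eq_inner g_def m_def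
    by (simp add: inner_add_left inner_add_right inner_commute power2_eq_square algebra_simps)
  also have "\<dots> < r^2"
    using assms(1) s(1) sm \<open>g < 0\<close> by (simp add: dist_norm norm_minus_commute mult_pos_neg)
  finally have lt: "(norm (w - c))^2 < r^2" .
  have "0 \<le> r" using assms(1) by (metis mem_sphere zero_le_dist)
  then have "w \<in> ball c r"
    using power_less_imp_less_base[OF lt] by (simp add: dist_norm norm_minus_commute)
  moreover have "w \<in> open_segment t p" unfolding in_segment w_def using s pt by auto
  ultimately show ?thesis by blast
qed

lemma sphere_points_facing_away:
  fixes c p t0 :: complex
  assumes t0: "t0 \<in> sphere c r" and r: "0 < r" and p: "r < norm (p - c)"
    and tangent: "(p - t0) \<bullet> (t0 - c) = 0" and e: "0 < e"
  shows "\<exists>th\<in>sphere c r. dist th t0 < e \<and> (p - th) \<bullet> (th - c) < 0"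
proof -
  have nt: "norm (t0 - c) = r" using t0 by (simp add: dist_norm norm_minus_commute)
  define w where "w = cnj (p - c) * (t0 - c)"
  have inner_w: "(p - c) \<bullet> z = Re (cnj (p - c) * z)" for z
    by (simp add: inner_complex_def algebra_simps)
  have "Re w = (p - c) \<bullet> (t0 - c)" by (simp add: w_def inner_w)
  also have "\<dots> = (p - t0) \<bullet> (t0 - c) + (t0 - c) \<bullet> (t0 - c)"
    by (simp add: inner_diff_left inner_diff_right algebra_simps)
  also have "\<dots> = r^2" using tangent nt by (simp add: power2_norm_eq_inner[symmetric])
  finally have Rew: "Re w = r^2" .
  have "norm w = norm (p - c) * r" unfolding w_def norm_mult complex_mod_cnj nt ..
  then have "norm w > r^2" unfolding power2_eq_square using p r by simp
  have Imw: "Im w \<noteq> 0"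
  proof
    assume "Im w = 0"
    then have "norm w = \<bar>Re w\<bar>" by (simp add: cmod_def)
    then show False using \<open>norm w > r^2\<close> Rew by simp
  qed
  have "isCont cis 0" unfolding cis_conv_exp[abs_def] by (intro continuous_intros)
  then obtain d where d: "d > 0" "\<And>x. dist x 0 < d \<Longrightarrow> dist (cis x) (cis 0) < e / r"
    unfolding continuous_at_eps_delta using e r by (metis divide_pos_pos)
  define h0 where "h0 = min (d/2) 1"
  have h0: "0 < h0" "h0 < d" "h0 \<le> 1" using d by (auto simp: h0_def)
  have "sin h0 > 0" using h0 pi_gt3 by (intro sin_gt_zero) auto
  define h where "h = (if Im w > 0 then h0 else - h0)"
  have "dist h 0 < d" using h0 by (simp add: h_def)
  have pos: "Im w * sin h > 0"
    using Imw \<open>sin h0 > 0\<close> by (auto simp: h_def mult_neg_neg mult_neg_pos)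
  define th where "th = c + (t0 - c) * cis h"
  have thc: "th - c = (t0 - c) * cis h" by (simp add: th_def)
  have "norm (th - c) = r" using nt by (simp add: thc norm_mult)
  then have "th \<in> sphere c r" by (simp add: dist_norm norm_minus_commute)
  moreover have "dist th t0 < e"
  proof -
    have "dist th t0 = r * dist (cis h) (cis 0)"
      by (simp add: dist_norm th_def nt[symmetric] norm_mult[symmetric] algebra_simps)
    also have "\<dots> < r * (e / r)"
      using d(2)[OF \<open>dist h 0 < d\<close>] r by (simp only: mult_strict_left_mono)
    finally show ?thesis using r by simp
  qed
  moreover have "(p - th) \<bullet> (th - c) < 0"
  proof -
    have "(p - th) \<bullet> (th - c) = (p - c) \<bullet> (th - c) - (th - c) \<bullet> (th - c)"
      by (simp add: inner_diff_left inner_diff_right algebra_simps)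
    also have "(p - c) \<bullet> (th - c) = Re (w * cis h)"
      unfolding inner_w thc w_def by (simp add: mult.assoc)
    also have "(th - c) \<bullet> (th - c) = r^2"
      using \<open>norm (th - c) = r\<close> by (simp add: power2_norm_eq_inner[symmetric])
    also have "Re (w * cis h) - r^2 = r^2 * (cos h - 1) - Im w * sin h" using Rew by (simp add: algebra_simps)
    moreover have "r^2 * (cos h - 1) \<le> 0" using cos_le_one[of h] by (simp add: mult_nonneg_nonpos)
    ultimately show ?thesis using pos by linarith
  qed
  ultimately show ?thesis by blast
qed

lemma continuous_at_prod3_pos:
  fixes g :: "'a::metric_space \<Rightarrow> 'b::metric_space \<Rightarrow> 'c::metric_space \<Rightarrow> real"
  assumes "continuous (at (x0, y0, z0)) (\<lambda>w. g (fst w) (fst (snd w)) (snd (snd w)))"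
    and "g x0 y0 z0 > 0"
  shows "\<exists>d>0. \<forall>x y z. dist x x0 < d \<longrightarrow> dist y y0 < d \<longrightarrow> dist z z0 < d \<longrightarrow> g x y z > 0"
proof -
  obtain e where e: "e > 0" "\<And>w. dist w (x0, y0, z0) < e \<Longrightarrow>
      dist (g (fst w) (fst (snd w)) (snd (snd w))) (g x0 y0 z0) < g x0 y0 z0"
    using assms unfolding continuous_at_eps_delta by (metis fst_conv snd_conv)
  have "g x y z > 0" if "dist x x0 < e / 3" "dist y y0 < e / 3" "dist z z0 < e / 3" for x y z
  proof -
    have "dist (y, z) (y0, z0) \<le> dist y y0 + dist z z0"
      unfolding dist_Pair_Pair by (rule sqrt_sum_squares_le_sum) auto
    moreover have "dist (x, y, z) (x0, y0, z0) \<le> dist x x0 + dist (y, z) (y0, z0)"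
      unfolding dist_Pair_Pair[of x] by (rule sqrt_sum_squares_le_sum) auto
    ultimately have "dist (x, y, z) (x0, y0, z0) < e" using that by linarith
    from e(2)[OF this] show ?thesis by (simp add: dist_real_def)
  qed
  then show ?thesis using e(1) by (intro exI[of _ "e / 3"]) auto
qed

lemma rtranclp_if_locally_related:
  fixes S :: "'a::metric_space set"
  assumes "connected S" "x \<in> S" "y \<in> S"
    and loc: "\<And>t. t \<in> S \<Longrightarrow>
      \<exists>d>0. \<forall>u\<in>S. \<forall>v\<in>S. dist u t < d \<longrightarrow> dist v t < d \<longrightarrow> u \<noteq> v \<longrightarrow> R u v"
  shows "R\<^sup>*\<^sup>* x y"
proof (rule connected_induction_simple[where P = "R\<^sup>*\<^sup>* x", OF assms(1-3)])
  fix t assume "t \<in> S"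
  then obtain d where d: "d > 0"
    "\<forall>u\<in>S. \<forall>v\<in>S. dist u t < d \<longrightarrow> dist v t < d \<longrightarrow> u \<noteq> v \<longrightarrow> R u v"
    using loc[OF \<open>t \<in> S\<close>] by blast
  have "R\<^sup>*\<^sup>* x v" if u: "u \<in> S \<inter> ball t d" and v: "v \<in> S \<inter> ball t d" and xu: "R\<^sup>*\<^sup>* x u"
    for u v
  proof (cases "u = v")
    case True
    with xu show ?thesis by simp
  next
    case False
    then have "R u v" using d(2) u v by (simp add: dist_commute)
    with xu show ?thesis by (rule rtranclp.rtrancl_into_rtrancl)
  qed
  moreover have "openin (top_of_set S) (S \<inter> ball t d)" by (simp add: openin_open_Int)
  moreover have "t \<in> S \<inter> ball t d" using \<open>t \<in> S\<close> d(1) by simp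
  ultimately show
    "\<exists>T. openin (top_of_set S) T \<and> t \<in> T \<and> (\<forall>u\<in>T. \<forall>v\<in>T. R\<^sup>*\<^sup>* x u \<longrightarrow> R\<^sup>*\<^sup>* x v)"
    by blast
qed simp

lemma finite_vertical_line_inter_sphere: "finite {y. Complex x0 y \<in> sphere p R}"
proof -
  have "{y. Complex x0 y \<in> sphere p R} \<subseteq>
     {Im p + sqrt (R^2 - (x0 - Re p)^2), Im p - sqrt (R^2 - (x0 - Re p)^2)}"
  proof
    fix y assume "y \<in> {y. Complex x0 y \<in> sphere p R}"
    then have "sqrt ((Re p - x0)^2 + (Im p - y)^2) = R" by (simp add: dist_norm cmod_def)
    then have "(Re p - x0)^2 + (Im p - y)^2 = R^2" by auto
    then have "(y - Im p)^2 = R^2 - (x0 - Re p)^2" by (simp add: power2_commute)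
    then have "\<bar>y - Im p\<bar> = sqrt (R^2 - (x0 - Re p)^2)" by (metis real_sqrt_abs)
    then show "y \<in> {Im p + sqrt (R^2 - (x0 - Re p)^2), Im p - sqrt (R^2 - (x0 - Re p)^2)}"
      by (auto simp: abs_if split: if_splits)
  qed
  then show ?thesis by (rule finite_subset) simp
qed

lemma Complex_in_vertical_segment:
  assumes "0 < a" "-a \<le> y" "y \<le> a"
  shows "Complex x0 y \<in> closed_segment (Complex x0 (-a)) (Complex x0 a)"
  unfolding in_segment
proof (intro exI[of _ "(y + a) / (2 * a)"] conjI)
  show "0 \<le> (y + a) / (2 * a)" "(y + a) / (2 * a) \<le> 1" using assms by (auto simp: divide_simps)
  show "Complex x0 y = (1 - (y + a) / (2 * a)) *\<^sub>R Complex x0 (- a) + ((y + a) / (2 * a)) *\<^sub>R Complex x0 a"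
    using assms by (simp add: complex_eq_iff scaleR_complex.ctr field_simps)
qed

locale billiard_cell =
  fixes L a :: real and b :: nat and Gbox :: "complex set"
    and wall :: "nat \<Rightarrow> complex set" and cen :: "nat \<Rightarrow> complex" and rad :: "nat \<Rightarrow> real"
    and r :: real
  assumes geometry: "cell_geometry L a b Gbox wall cen rad r"
begin

abbreviation "c \<equiv> ctr L"
abbreviation "K \<equiv> frontier Gbox"
abbreviation "openings \<equiv> opening_L a \<union> opening_R L a"
abbreviation "wall_hit k \<equiv> radial_proj (cen k) (rad k)"

lemma params_pos: "0 < L" "0 < a" "0 < r"
  using geometry unfolding cell_geometry_def by auto

lemma frontier_Gbox: "K = openings \<union> (\<Union>k\<in>{1..b}. wall k)"
  using geometry unfolding cell_geometry_def by blast

lemma cball_subset_interior: "cball c r \<subseteq> interior Gbox"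
  using geometry unfolding cell_geometry_def by blast

lemma closed_segment_ctr_frontier: "z \<in> K \<Longrightarrow> closed_segment c z \<inter> K = {z}"
  using geometry unfolding cell_geometry_def by blast

lemma closed_Gbox: "closed Gbox"
  using geometry unfolding cell_geometry_def by blast

lemma cball_subset_Gbox: "cball c r \<subseteq> Gbox"
  using cball_subset_interior interior_subset by blast

lemma cball_inter_frontier: "cball c r \<inter> K = {}"
  using cball_subset_interior by (auto simp: frontier_def)

lemma frontier_subset_Gbox: "K \<subseteq> Gbox"
  using closed_Gbox by (rule frontier_subset_closed)

context
  fixes k assumes k: "k \<in> {1..b}"
begin

lemma rad_pos: "0 < rad k"
  and wall_subset_sphere: "wall k \<subseteq> sphere (cen k) (rad k)"
  and compact_wall: "compact (wall k)"
  and Gbox_inter_ball_cen: "Gbox \<inter> ball (cen k) (rad k) = {}"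
  using geometry k unfolding cell_geometry_def by auto

lemma wall_subset_frontier: "wall k \<subseteq> K"
  using k frontier_Gbox by auto

lemma piece_wall: "piece L a b wall k = wall k"
  using k by (simp add: piece_def)

end

lemma openings_subset_frontier: "openings \<subseteq> K"
  using frontier_Gbox by auto

lemma frontier_eq_Union_pieces: "K = (\<Union>i\<in>{0..Suc b}. piece L a b wall i)"
proof -
  have "{0..Suc b} = insert 0 (insert (Suc b) {1..b})" by auto
  then show ?thesis using frontier_Gbox piece_wall by (auto simp: piece_def)
qed

lemma corners_subset_frontier: "corners L a b wall \<subseteq> K"
  unfolding corners_def frontier_eq_Union_pieces by blast

lemma in_cornersI:
  "i \<in> {0..Suc b} \<Longrightarrow> j \<in> {0..Suc b} \<Longrightarrow> i \<noteq> j \<Longrightarrow> z \<in> piece L a b wall i \<Longrightarrow>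
     z \<in> piece L a b wall j \<Longrightarrow> z \<in> corners L a b wall"
  unfolding corners_def by blast

lemma closed_piece: "i \<in> {0..Suc b} \<Longrightarrow> closed (piece L a b wall i)"
  using compact_wall[of i] by (auto simp: piece_def opening_L_def opening_R_def compact_imp_closed)

lemma regular_wall_point:
  assumes k: "k \<in> {1..b}" and q: "q \<in> wall k" "q \<notin> corners L a b wall"
  shows "q \<notin> openings" and "\<And>j. j \<in> {1..b} \<Longrightarrow> q \<in> wall j \<Longrightarrow> j = k"
proof -
  have kk: "k \<in> {0..Suc b}" "q \<in> piece L a b wall k" using k q(1) piece_wall[OF k] by auto
  show "q \<notin> openings"
  proof
    assume "q \<in> openings"
    then have "q \<in> piece L a b wall 0 \<or> q \<in> piece L a b wall (Suc b)" by (auto simp: piece_def)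
    then show False using in_cornersI[OF _ kk(1) _ _ kk(2)] k q(2) by fastforce
  qed
  show "j = k" if "j \<in> {1..b}" "q \<in> wall j" for j
    using in_cornersI[OF _ kk(1) _ _ kk(2), of j] that q(2) piece_wall[OF that(1)] by fastforce
qed

lemma exists_regular_opening_point:
  assumes x0: "x0 = 0 \<or> x0 = L"
  obtains z where "z \<in> closed_segment (Complex x0 (-a)) (Complex x0 a)" "z \<in> K"
    "z \<notin> corners L a b wall"
proof -
  define S where "S = (\<Union>k\<in>{1..b}. {y. Complex x0 y \<in> sphere (cen k) (rad k)})"
  have "finite S" unfolding S_def using finite_vertical_line_inter_sphere by auto
  then have "infinite ({-a<..<a} - S)" using params_pos(2) by (intro Diff_infinite_finite) auto
  then obtain y where y: "y \<in> {-a<..<a}" "y \<notin> S" by (metis Diff_iff ex_in_conv finite.emptyI)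
  define z where "z = Complex x0 y"
  have zs: "z \<in> closed_segment (Complex x0 (-a)) (Complex x0 a)"
    unfolding z_def using y(1) params_pos(2) by (intro Complex_in_vertical_segment) auto
  have "z \<in> openings" using zs x0 by (auto simp: opening_L_def opening_R_def)
  then have zK: "z \<in> K" using openings_subset_frontier by auto
  have piece_z: "i = (if x0 = 0 then 0 else Suc b)" if "i \<in> {0..Suc b}" "z \<in> piece L a b wall i" for i
  proof -
    have Re_openings: "Re w = 0" if "w \<in> opening_L a" for w
      using that by (auto simp: opening_L_def in_segment scaleR_complex.ctr)
    have Re_openings': "Re w = L" if "w \<in> opening_R L a" for w
      using that by (auto simp: opening_R_def in_segment scaleR_complex.ctr algebra_simps)
    have "i = 0 \<or> i = Suc b \<or> i \<in> {1..b}" using that(1) by (simp only: atLeastAtMost_iff) arith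
    then consider "i = 0" | "i = Suc b" | "i \<in> {1..b}" by blast
    then show ?thesis
    proof cases
      case 3
      then have "z \<in> wall i" using that(2) piece_wall by auto
      then show ?thesis using 3 y(2) wall_subset_sphere[OF 3] by (auto simp: S_def z_def)
    qed (use that(2) x0 params_pos(1) in \<open>auto simp: piece_def z_def dest: Re_openings Re_openings'\<close>)
  qed
  have "z \<notin> corners L a b wall"
    unfolding corners_def using piece_z by blast
  then show ?thesis using that zs zK by blast
qed

definition clear_segment :: "complex \<Rightarrow> complex \<Rightarrow> bool" where
  "clear_segment x q \<longleftrightarrow> closed_segment x q \<subseteq> cell Gbox L r \<and> closed_segment x q \<inter> K \<subseteq> {q}
     \<and> closed_segment x q \<inter> sphere c r \<subseteq> {x} \<and> (q - x) \<bullet> (x - c) \<noteq> 0"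

lemma clear_segmentI:
  assumes x: "x \<in> sphere c r" and q: "q \<in> K" and out: "0 < (q - x) \<bullet> (x - c)"
    and K: "closed_segment x q \<inter> K \<subseteq> {q}"
  shows "clear_segment x q"
proof -
  have start: "w = x" if "w \<in> closed_segment x q" "dist c w \<le> r" for w
    using closed_segment_inter_cball_start[OF _ out that] x by simp
  have "x \<in> Gbox" using x cball_subset_Gbox sphere_cball by blast
  moreover have "q \<in> Gbox" using q frontier_subset_Gbox by blast
  ultimately have "closed_segment x q \<subseteq> Gbox" using K by (rule closed_segment_subset_if_frontier_inter)
  moreover have "w \<notin> ball c r" if "w \<in> closed_segment x q" for w
  proof
    assume "w \<in> ball c r"
    with start[OF that] x show False by simp
  qed
  ultimately have "closed_segment x q \<subseteq> cell Gbox L r" by (auto simp: cell_def)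
  moreover have "closed_segment x q \<inter> sphere c r \<subseteq> {x}" using start by auto
  ultimately show ?thesis using K out by (simp add: clear_segment_def)
qed

lemma clear_segment_radial: "z \<in> K \<Longrightarrow> clear_segment (radial_proj c r z) z"
proof -
  assume z: "z \<in> K"
  then have "z \<notin> cball c r" using cball_inter_frontier by blast
  then have zc: "r < norm (z - c)" by (simp add: dist_norm norm_minus_commute not_le)
  then have "radial_proj c r z \<in> closed_segment c z"
    using params_pos(3) by (intro radial_proj_in_closed_segment) auto
  then have "closed_segment (radial_proj c r z) z \<inter> K \<subseteq> {z}"
    using closed_segment_ctr_frontier[OF z] subset_closed_segment by blast
  moreover have "radial_proj c r z \<in> sphere c r"
    using zc params_pos(3) by (intro radial_proj_in_sphere) auto
  ultimately show ?thesis
    using clear_segmentI z inner_radial_proj_pos[OF params_pos(3) zc] by blast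
qed

lemma admissible_path_pair:
  assumes "clear_segment x z" "z \<notin> corners L a b wall"
  shows "admissible_path L a b Gbox wall cen r [x, z]"
proof -
  have seg: "closed_segment x z \<subseteq> cell Gbox L r" "closed_segment x z \<inter> K \<subseteq> {z}"
    "closed_segment x z \<inter> sphere c r \<subseteq> {x}" "(z - x) \<bullet> (x - c) \<noteq> 0"
    using assms(1) unfolding clear_segment_def by auto
  then have "x \<noteq> z" by auto
  moreover have "\<forall>w\<in>closed_segment x z. w \<in> openings \<longrightarrow> w = z"
    using seg(2) openings_subset_frontier by auto
  moreover have "closed_segment x z \<inter> corners L a b wall = {}"
    using seg(2) corners_subset_frontier assms(2) by auto
  ultimately show ?thesis using seg(1,3,4) unfolding admissible_path_def by auto
qed

lemma admissible_path_Cons: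
  assumes path: "admissible_path L a b Gbox wall cen r (y # z # ps)"
    and x: "x \<noteq> y" "closed_segment x y \<subseteq> cell Gbox L r"
      "closed_segment x y \<inter> openings \<subseteq> {x}" "closed_segment x y \<inter> corners L a b wall = {}"
      "\<forall>w\<in>closed_segment x y \<inter> sphere c r. (y - x) \<bullet> (w - c) \<noteq> 0"
    and y: "y \<in> cell_boundary Gbox L r"
      "y \<notin> openings" \<comment> \<open>no longer the first vertex, so no longer exempt\<close>
      "\<forall>k\<in>{1..b}. y \<in> wall k \<longrightarrow> sgn (z - y) = sgn (reflect_dir (y - cen k) (y - x))"
  shows "admissible_path L a b Gbox wall cen r (x # y # z # ps)"
proof -
  define qs where "qs = y # z # ps"
  have qs: "qs ! 0 = y" "qs ! 1 = z" "2 \<le> length qs" by (simp_all add: qs_def)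
  note P = path[folded qs_def, unfolded admissible_path_def]
  let ?n = "length (x # qs)"
  have "(x # qs) ! i \<noteq> (x # qs) ! (i + 1) \<and>
      closed_segment ((x # qs) ! i) ((x # qs) ! (i + 1)) \<subseteq> cell Gbox L r" if "i < ?n - 1" for i
    using that x P qs by (cases i) auto
  moreover have "(x # qs) ! i \<in> cell_boundary Gbox L r" if "0 < i" "i < ?n - 1" for i
  proof -
    obtain j where j: "i = Suc j" using gr0_implies_Suc[OF \<open>0 < i\<close>] by blast
    then show ?thesis using that y(1) P qs by (cases j) auto
  qed
  moreover have "sgn ((x # qs) ! (i + 1) - (x # qs) ! i) =
      sgn (reflect_dir ((x # qs) ! i - cen k) ((x # qs) ! i - (x # qs) ! (i - 1)))"
    if "0 < i" "i < ?n - 1" "k \<in> {1..b}" "(x # qs) ! i \<in> wall k" for i k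
  proof -
    obtain j where j: "i = Suc j" using gr0_implies_Suc[OF \<open>0 < i\<close>] by blast
    show ?thesis
    proof (cases j)
      case 0 then show ?thesis using y(3) that(3,4) qs j by simp
    next
      case (Suc j')
      then show ?thesis using P that j by auto
    qed
  qed
  moreover have "(i = 0 \<and> w = (x # qs) ! 0) \<or> (i = ?n - 2 \<and> w = (x # qs) ! (?n - 1))"
    if "i < ?n - 1" "w \<in> closed_segment ((x # qs) ! i) ((x # qs) ! (i + 1))" "w \<in> openings" for i w
  proof (cases i)
    case 0 then show ?thesis using x(3) that qs by auto
  next
    case (Suc j)
    have P4: "(m = 0 \<and> v = qs ! 0) \<or> (m = length qs - 2 \<and> v = qs ! (length qs - 1))"
      if "m < length qs - 1" "v \<in> closed_segment (qs ! m) (qs ! (m + 1))" "v \<in> openings" for m v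
      using P that by blast
    have "(j = 0 \<and> w = qs ! 0) \<or> (j = length qs - 2 \<and> w = qs ! (length qs - 1))"
      by (rule P4) (use that Suc in auto)
    then show ?thesis using Suc y(2) that(3) qs by (auto simp: nth_Cons')
  qed
  moreover have "closed_segment ((x # qs) ! i) ((x # qs) ! (i + 1)) \<inter> corners L a b wall = {}"
    if "i < ?n - 1" for i
    using that x(4) P qs by (cases i) auto
  moreover have "((x # qs) ! (i + 1) - (x # qs) ! i) \<bullet> (w - c) \<noteq> 0"
    if "i < ?n - 1" "w \<in> closed_segment ((x # qs) ! i) ((x # qs) ! (i + 1)) \<inter> sphere c r" for i w
    using that x(5) P qs by (cases i) auto
  ultimately show ?thesis using qs(3) unfolding admissible_path_def qs_def[symmetric] by auto
qed

definition bounce :: "complex \<Rightarrow> complex \<Rightarrow> complex \<Rightarrow> bool" where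
  "bounce x q y \<longleftrightarrow> x \<in> sphere c r \<and> y \<in> sphere c r \<and> q \<in> K \<and> q \<notin> corners L a b wall
     \<and> q \<notin> openings \<and> clear_segment x q \<and> clear_segment y q
     \<and> (\<forall>k\<in>{1..b}. q \<in> wall k \<longrightarrow> sgn (y - q) = sgn (reflect_dir (q - cen k) (q - x)))"

lemma clear_segment_avoids:
  assumes "clear_segment x q" "q \<notin> corners L a b wall"
  shows "closed_segment x q \<inter> corners L a b wall = {}" "closed_segment x q \<inter> openings \<subseteq> {q}"
  using assms corners_subset_frontier openings_subset_frontier unfolding clear_segment_def by auto

lemma admissible_path_Cons_bounce:
  assumes B: "bounce x q y" and path: "admissible_path L a b Gbox wall cen r (y # ps)"
  shows "admissible_path L a b Gbox wall cen r (x # q # y # ps)"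
proof -
  obtain z ps' where ps: "ps = z # ps'"
    using path by (cases ps) (auto simp: admissible_path_def)
  have sph: "x \<in> sphere c r" "y \<in> sphere c r" and q: "q \<in> K" "q \<notin> corners L a b wall" "q \<notin> openings"
    and cx: "clear_segment x q" and cy: "clear_segment y q"
    using B by (auto simp: bounce_def)
  have notK: "y \<notin> K" "x \<notin> K" using sph cball_inter_frontier sphere_cball by blast+
  have "admissible_path L a b Gbox wall cen r (q # y # z # ps')"
  proof (rule admissible_path_Cons[OF path[unfolded ps]])
    show "q \<noteq> y" using q(1) notK by auto
    show "closed_segment q y \<subseteq> cell Gbox L r" "closed_segment q y \<inter> openings \<subseteq> {q}"
      "closed_segment q y \<inter> corners L a b wall = {}"
      using cy clear_segment_avoids[OF cy q(2)] by (simp_all add: clear_segment_def closed_segment_commute)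
    show "\<forall>w\<in>closed_segment q y \<inter> sphere c r. (y - q) \<bullet> (w - c) \<noteq> 0"
      using cy by (auto simp: clear_segment_def closed_segment_commute inner_diff_left)
    show "y \<in> cell_boundary Gbox L r" using sph by (simp add: cell_boundary_def)
    show "y \<notin> openings" using notK openings_subset_frontier by blast
    show "\<forall>k\<in>{1..b}. y \<in> wall k \<longrightarrow> sgn (z - y) = sgn (reflect_dir (y - cen k) (y - q))"
      using notK wall_subset_frontier by blast
  qed
  then show ?thesis unfolding ps
  proof (rule admissible_path_Cons)
    show "x \<noteq> q" using q(1) notK by auto
    show "closed_segment x q \<subseteq> cell Gbox L r"
      "\<forall>w\<in>closed_segment x q \<inter> sphere c r. (q - x) \<bullet> (w - c) \<noteq> 0"
      using cx by (auto simp: clear_segment_def)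
    show "closed_segment x q \<inter> openings \<subseteq> {x}" using clear_segment_avoids(2)[OF cx q(2)] q(3) by auto
    show "closed_segment x q \<inter> corners L a b wall = {}" by (rule clear_segment_avoids(1)[OF cx q(2)])
    show "q \<in> cell_boundary Gbox L r" using q(1) by (simp add: cell_boundary_def)
    show "q \<notin> openings" by (rule q(3))
    show "\<forall>k\<in>{1..b}. q \<in> wall k \<longrightarrow> sgn (y - q) = sgn (reflect_dir (q - cen k) (q - x))"
      using B by (simp add: bounce_def)
  qed
qed

lemma admissible_path_if_bounce_reachable:
  assumes "(\<lambda>x y. \<exists>q. bounce x q y)\<^sup>*\<^sup>* t t'" "admissible_path L a b Gbox wall cen r (t' # ps)"
  shows "\<exists>qs. admissible_path L a b Gbox wall cen r qs \<and> hd qs = t \<and> last qs = last (t' # ps)"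
  using assms(1)
proof (induction rule: converse_rtranclp_induct)
  case base
  show ?case using assms(2) by (intro exI[of _ "t' # ps"]) simp
next
  case (step x y)
  then obtain q qs where q: "bounce x q y"
    and qs: "admissible_path L a b Gbox wall cen r qs" "hd qs = y" "last qs = last (t' # ps)"
    by blast
  then obtain qs' where "qs = y # qs'" by (cases qs) (auto simp: admissible_path_def)
  then show ?case
    using admissible_path_Cons_bounce[OF q] qs by (intro exI[of _ "x # q # qs"]) auto
qed

lemma illuminatedD:
  assumes k: "k \<in> {1..b}" and t: "t \<in> illuminated L a b Gbox wall cen r k"
  shows "t \<in> sphere c r" "rad k < norm (t - cen k)" "wall_hit k t \<in> wall k"
    "wall_hit k t \<notin> corners L a b wall" "open_segment t (wall_hit k t) \<inter> (K \<union> cball c r) = {}"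
    "0 \<le> (cen k - t) \<bullet> (t - c)"
proof -
  obtain p where p: "t \<in> sphere c r" "p \<in> wall k" "p \<notin> corners L a b wall"
    "p \<in> open_segment t (cen k)" "open_segment t p \<inter> (K \<union> cball c r) = {}"
    using t unfolding illuminated_def by blast
  obtain u where u: "t \<noteq> cen k" "0 < u" "u < 1" "p = (1 - u) *\<^sub>R t + u *\<^sub>R cen k"
    using p(4) by (auto simp: in_segment)
  have pc: "p - cen k = (1 - u) *\<^sub>R (t - cen k)" and pt: "p - t = u *\<^sub>R (cen k - t)"
    using u(4) by (simp_all add: algebra_simps)
  have pR: "dist (cen k) p = rad k" using p(2) wall_subset_sphere[OF k] by auto
  then have "rad k = (1 - u) * norm (t - cen k)"
    using u(3) by (simp add: dist_norm norm_minus_commute pc)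
  then show "rad k < norm (t - cen k)" using u(1,2) by simp
  have "p = wall_hit k t"
    using p(4) pR u(1) by (intro radial_proj_eq_if_in_segment) (auto simp: open_closed_segment)
  then show "t \<in> sphere c r" "wall_hit k t \<in> wall k" "wall_hit k t \<notin> corners L a b wall"
    "open_segment t (wall_hit k t) \<inter> (K \<union> cball c r) = {}"
    using p by auto
  show "0 \<le> (cen k - t) \<bullet> (t - c)"
  proof (rule ccontr)
    assume "\<not> ?thesis"
    then have "(p - t) \<bullet> (t - c) < 0" using u(2) by (simp add: pt mult_pos_neg)
    with p(1) have "open_segment t p \<inter> ball c r \<noteq> {}" by (rule open_segment_meets_ball)
    then show False using p(5) by auto
  qed
qed

lemma illuminated_nbhd_transversal:
  assumes k: "k \<in> {1..b}" and t0: "t0 \<in> sphere c r" and e: "0 < e"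
    and ill: "\<And>t. t \<in> sphere c r \<Longrightarrow> dist t t0 < e \<Longrightarrow> t \<in> illuminated L a b Gbox wall cen r k"
  shows "0 < (wall_hit k t0 - t0) \<bullet> (t0 - c)"
proof -
  have t0i: "t0 \<in> illuminated L a b Gbox wall cen r k" using ill[OF t0] e by simp
  have "cen k \<notin> cball c r"
    using cball_subset_Gbox Gbox_inter_ball_cen[OF k] rad_pos[OF k] by fastforce
  then have far: "r < norm (cen k - c)" by (simp add: dist_norm norm_minus_commute not_le)
  have "(cen k - t0) \<bullet> (t0 - c) \<noteq> 0"
  proof
    assume "(cen k - t0) \<bullet> (t0 - c) = 0"
    then obtain th where th: "th \<in> sphere c r" "dist th t0 < e" "(cen k - th) \<bullet> (th - c) < 0"
      using sphere_points_facing_away[OF t0 params_pos(3) far _ e] by blast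
    then show False using illuminatedD(6)[OF k ill[OF th(1,2)]] by simp
  qed
  then have pos: "0 < (cen k - t0) \<bullet> (t0 - c)" using illuminatedD(6)[OF k t0i] by simp
  have "rad k / norm (t0 - cen k) < 1"
    using illuminatedD(2)[OF k t0i] rad_pos[OF k] by (simp add: divide_less_eq)
  then show ?thesis using pos by (simp add: radial_proj_minus_self)
qed

lemma frontier_near_regular_wall_point:
  assumes k: "k \<in> {1..b}" and p: "p \<in> wall k" "p \<notin> corners L a b wall"
  obtains \<rho> where "0 < \<rho>" "\<And>y. y \<in> K \<Longrightarrow> dist y p < \<rho> \<Longrightarrow> y \<in> wall k"
proof -
  define others where "others = (\<Union>i\<in>{0..Suc b} - {k}. piece L a b wall i)"
  have "open (- others)" unfolding others_def using closed_piece by (intro open_Compl closed_UN) auto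
  moreover have "p \<notin> others"
    unfolding others_def using in_cornersI[of _ k p] k p piece_wall[OF k] by force
  ultimately obtain \<rho> where "0 < \<rho>" "ball p \<rho> \<subseteq> - others"
    using open_contains_ball by blast
  moreover have "K \<subseteq> others \<union> wall k"
    unfolding frontier_eq_Union_pieces others_def using piece_wall[OF k] by auto
  ultimately show ?thesis using that by (force simp: dist_commute)
qed

lemma clear_segments_near:
  assumes k: "k \<in> {1..b}" and t0: "t0 \<in> sphere c r"
    and p0: "p0 \<in> wall k" "p0 \<notin> corners L a b wall" and free: "open_segment t0 p0 \<inter> K = {}"
  obtains d where "0 < d"
    "\<And>x q. x \<in> sphere c r \<Longrightarrow> q \<in> K \<Longrightarrow> dist x t0 < d \<Longrightarrow> dist q p0 < d \<Longrightarrow>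
       0 < (q - x) \<bullet> (x - c) \<Longrightarrow> 0 < (x - q) \<bullet> (q - cen k) \<Longrightarrow> clear_segment x q"
proof -
  obtain \<rho> where \<rho>: "0 < \<rho>" "\<And>y. y \<in> K \<Longrightarrow> dist y p0 < \<rho> \<Longrightarrow> y \<in> wall k"
    using frontier_near_regular_wall_point[OF k p0] by blast
  define C where "C = closed_segment t0 p0 \<inter> {w. \<rho>/2 \<le> dist w p0}"
  have "closed {w. \<rho>/2 \<le> dist w p0}"
    by (rule closed_Collect_le) (intro continuous_intros)+
  then have "compact C" unfolding C_def by (intro compact_Int_closed) auto
  moreover have "C \<inter> K = {}"
  proof -
    have "t0 \<notin> K" using t0 cball_inter_frontier sphere_cball by blast
    then have "w \<in> open_segment t0 p0" if "w \<in> C" "w \<in> K" for w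
      using that \<rho>(1) by (auto simp: C_def open_segment_def)
    then show ?thesis using free by blast
  qed
  ultimately obtain dd where dd: "0 < dd" "\<forall>w\<in>C. \<forall>y\<in>K. dd \<le> dist w y"
    using separate_compact_closed[of C K] by blast
  show ?thesis
  proof (rule that[of "min (\<rho>/2) dd"])
    show "0 < min (\<rho>/2) dd" using \<rho>(1) dd(1) by simp
    fix x q assume x: "x \<in> sphere c r" and q: "q \<in> K"
      and near: "dist x t0 < min (\<rho>/2) dd" "dist q p0 < min (\<rho>/2) dd"
      and out: "0 < (q - x) \<bullet> (x - c)" and into: "0 < (x - q) \<bullet> (q - cen k)"
    have "dist q p0 < \<rho>" using near(2) \<rho>(1) by simp
    then have "q \<in> wall k" by (rule \<rho>(2)[OF q])
    then have qR: "dist (cen k) q = rad k" using wall_subset_sphere[OF k] by auto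
    have "w = q" if w: "w \<in> closed_segment x q" "w \<in> K" for w
    proof (cases "dist w p0 < \<rho>")
      case True
      then have "dist (cen k) w = rad k" using \<rho>(2)[OF w(2)] wall_subset_sphere[OF k] by force
      then show ?thesis
        using closed_segment_inter_cball_start[OF qR into, of w] w(1) by (simp add: closed_segment_commute)
    next
      case False
      obtain w0 where w0: "w0 \<in> closed_segment t0 p0" "dist w w0 < min (\<rho>/2) dd"
        using closed_segment_near[OF w(1) near] by blast
      have "\<rho>/2 \<le> dist w0 p0" using False w0(2) dist_triangle[of w p0 w0] by linarith
      then have "dd \<le> dist w0 w" using dd(2) w0(1) w(2) by (simp add: C_def)
      then show ?thesis using w0(2) by (simp add: dist_commute)
    qed
    then show "clear_segment x q" using clear_segmentI[OF x q out] by blast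
  qed
qed

lemma bounce_if_reflection_root:
  assumes k: "k \<in> {1..b}" and t: "t1 \<in> sphere c r" "t2 \<in> sphere c r"
    and q: "q \<in> wall k" "q \<notin> corners L a b wall" and clear: "clear_segment t1 q" "clear_segment t2 q"
    and root: "cross (reflect_dir (q - cen k) (q - t1)) (t2 - q) = 0"
    and forward: "0 < reflect_dir (q - cen k) (q - t1) \<bullet> (t2 - q)"
  shows "bounce t1 q t2"
proof -
  have "sgn (t2 - q) = sgn (reflect_dir (q - cen j) (q - t1))" if "j \<in> {1..b}" "q \<in> wall j" for j
    using regular_wall_point(2)[OF k q that] sgn_eq_if_cross_eq_0[OF root forward] by simp
  then show ?thesis
    using t q clear regular_wall_point(1)[OF k q] wall_subset_frontier[OF k] by (auto simp: bounce_def)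
qed

lemma bounce_conditions_near:
  assumes k: "k \<in> {1..b}" and t0: "t0 \<in> sphere c r" and e: "0 < e"
    and ill: "\<And>t. t \<in> sphere c r \<Longrightarrow> dist t t0 < e \<Longrightarrow> t \<in> illuminated L a b Gbox wall cen r k"
  obtains d where "0 < d"
    "\<And>t1 t2 q. t1 \<in> sphere c r \<Longrightarrow> t2 \<in> sphere c r \<Longrightarrow> q \<in> K \<Longrightarrow>
       dist t1 t0 < d \<Longrightarrow> dist t2 t0 < d \<Longrightarrow> dist q (wall_hit k t0) < d \<Longrightarrow>
       clear_segment t1 q \<and> clear_segment t2 q \<and> 0 < reflect_dir (q - cen k) (q - t1) \<bullet> (t2 - q)"
proof -
  define p0 where "p0 = wall_hit k t0"
  have t0i: "t0 \<in> illuminated L a b Gbox wall cen r k" using ill[OF t0] e by simp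
  note hit = illuminatedD[OF k t0i, folded p0_def]
  have "t0 \<notin> K" using t0 cball_inter_frontier sphere_cball by blast
  then have "t0 \<noteq> p0" using hit(3) wall_subset_frontier[OF k] by blast
  have "p0 \<noteq> cen k" using hit(3) wall_subset_sphere[OF k] rad_pos[OF k] by fastforce
  define g where "g = (\<lambda>x y q. min (min ((q - x) \<bullet> (x - c)) ((q - y) \<bullet> (y - c)))
      (min (min ((x - q) \<bullet> (q - cen k)) ((y - q) \<bullet> (q - cen k))) (reflect_dir (q - cen k) (q - x) \<bullet> (y - q))))"
  have "0 < g t0 t0 p0"
  proof -
    have "0 < (p0 - t0) \<bullet> (t0 - c)"
      using illuminated_nbhd_transversal[OF k t0 e ill] by (simp add: p0_def)
    moreover have "0 < (t0 - p0) \<bullet> (p0 - cen k)"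
      using inner_radial_proj_pos[OF rad_pos[OF k] hit(2)] by (simp add: p0_def)
    moreover have "reflect_dir (p0 - cen k) (p0 - t0) = t0 - p0"
      using reflect_dir_radial_proj[OF rad_pos[OF k] hit(2)] by (simp add: p0_def)
    ultimately show ?thesis using \<open>t0 \<noteq> p0\<close> by (simp add: g_def inner_commute)
  qed
  moreover have "continuous (at (t0, t0, p0)) (\<lambda>w. g (fst w) (fst (snd w)) (snd (snd w)))"
    unfolding g_def reflect_dir_def using \<open>p0 \<noteq> cen k\<close> by (intro continuous_intros) auto
  ultimately obtain d1 where d1: "0 < d1"
    "\<forall>x y q. dist x t0 < d1 \<longrightarrow> dist y t0 < d1 \<longrightarrow> dist q p0 < d1 \<longrightarrow> 0 < g x y q"
    using continuous_at_prod3_pos by blast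
  obtain d2 where d2: "0 < d2"
    "\<And>x q. x \<in> sphere c r \<Longrightarrow> q \<in> K \<Longrightarrow> dist x t0 < d2 \<Longrightarrow> dist q p0 < d2 \<Longrightarrow>
       0 < (q - x) \<bullet> (x - c) \<Longrightarrow> 0 < (x - q) \<bullet> (q - cen k) \<Longrightarrow> clear_segment x q"
    using clear_segments_near[OF k t0 hit(3,4)] hit(5) by blast
  show ?thesis
  proof (rule that[of "min d1 d2"])
    show "0 < min d1 d2" using d1(1) d2(1) by simp
    fix t1 t2 q assume t: "t1 \<in> sphere c r" "t2 \<in> sphere c r" and q: "q \<in> K"
      and near: "dist t1 t0 < min d1 d2" "dist t2 t0 < min d1 d2" "dist q (wall_hit k t0) < min d1 d2"
    have "0 < g t1 t2 q" using d1(2) near by (simp add: p0_def)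
    then have pos: "0 < (q - t1) \<bullet> (t1 - c)" "0 < (q - t2) \<bullet> (t2 - c)"
      "0 < (t1 - q) \<bullet> (q - cen k)" "0 < (t2 - q) \<bullet> (q - cen k)"
      "0 < reflect_dir (q - cen k) (q - t1) \<bullet> (t2 - q)"
      by (simp_all add: g_def)
    show "clear_segment t1 q \<and> clear_segment t2 q \<and> 0 < reflect_dir (q - cen k) (q - t1) \<bullet> (t2 - q)"
      using d2(2)[OF t(1) q _ _ pos(1,3)] d2(2)[OF t(2) q _ _ pos(2,4)] pos(5) near
      by (simp add: p0_def)
  qed
qed

lemma bounce_locally:
  assumes oc: "one_controllable L a b Gbox wall cen r" and t0: "t0 \<in> sphere c r"
  shows "\<exists>d>0. \<forall>t1\<in>sphere c r. \<forall>t2\<in>sphere c r. dist t1 t0 < d \<longrightarrow> dist t2 t0 < d \<longrightarrow>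
    (\<exists>q. bounce t1 q t2)"
proof -
  obtain k where k: "k \<in> {1..b}" "t0 \<in> I_set L a b Gbox wall cen r k"
    using oc t0 unfolding one_controllable_def by blast
  obtain U where U: "openin (top_of_set (sphere c r)) U" "U \<subseteq> illuminated L a b Gbox wall cen r k"
    "t0 \<in> U"
    using k(2) unfolding I_set_def by blast
  obtain e where e: "0 < e"
    "\<And>t. t \<in> sphere c r \<Longrightarrow> dist t t0 < e \<Longrightarrow> t \<in> illuminated L a b Gbox wall cen r k"
    using U unfolding openin_euclidean_subtopology_iff by blast
  obtain d0 where d0: "0 < d0"
    "\<And>t1 t2 q. t1 \<in> sphere c r \<Longrightarrow> t2 \<in> sphere c r \<Longrightarrow> q \<in> K \<Longrightarrow>
       dist t1 t0 < d0 \<Longrightarrow> dist t2 t0 < d0 \<Longrightarrow> dist q (wall_hit k t0) < d0 \<Longrightarrow>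
       clear_segment t1 q \<and> clear_segment t2 q \<and> 0 < reflect_dir (q - cen k) (q - t1) \<bullet> (t2 - q)"
    using bounce_conditions_near[OF k(1) t0 e] by blast
  have "t0 \<noteq> cen k"
    using illuminatedD(2)[OF k(1) e(2)[OF t0]] e(1) rad_pos[OF k(1)] by auto
  then obtain d2 where d2: "0 < d2" "\<And>x. dist x t0 < d2 \<Longrightarrow> dist (wall_hit k x) (wall_hit k t0) < d0"
    using isCont_radial_proj d0(1) unfolding continuous_at_eps_delta by blast
  define d where "d = min (min e d2) (min d0 r) / 2"
  have d: "0 < d" "2 * d \<le> e" "2 * d \<le> d2" "d \<le> d0" "2 * d \<le> r"
    using e(1) d2(1) d0(1) params_pos(3) by (auto simp: d_def)
  have "\<exists>q. bounce t1 q t2"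
    if t: "t1 \<in> sphere c r" "t2 \<in> sphere c r" "dist t1 t0 < d" "dist t2 t0 < d" for t1 t2
  proof -
    define \<gamma> where "\<gamma> s = radial_proj c r (linepath t1 t2 s)" for s
    note arc = radial_arc_near[OF t0 t(1,2) t(3,4) d(5), folded \<gamma>_def]
    have ill: "\<gamma> s \<in> illuminated L a b Gbox wall cen r k" and near: "dist (\<gamma> s) t0 < d2"
      if "s \<in> {0..1}" for s
      using arc(4,5)[OF that] e(2) d by auto
    obtain s where s: "s \<in> {0..1}"
      "cross (reflect_dir (wall_hit k (\<gamma> s) - cen k) (wall_hit k (\<gamma> s) - t1)) (t2 - wall_hit k (\<gamma> s)) = 0"
      using exists_reflection_root[OF rad_pos[OF k(1)] arc(1-3)] illuminatedD(2)[OF k(1) ill] by blast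
    define q where "q = wall_hit k (\<gamma> s)"
    have q: "q \<in> wall k" "q \<notin> corners L a b wall"
      using illuminatedD(3,4)[OF k(1) ill[OF s(1)]] by (simp_all add: q_def)
    have "dist q (wall_hit k t0) < d0" using d2(2)[OF near[OF s(1)]] by (simp add: q_def)
    then have "clear_segment t1 q \<and> clear_segment t2 q \<and> 0 < reflect_dir (q - cen k) (q - t1) \<bullet> (t2 - q)"
      using d0(2)[OF t(1,2)] q(1) wall_subset_frontier[OF k(1)] t(3,4) d(4) by auto
    then show ?thesis
      using bounce_if_reflection_root[OF k(1) t(1,2) q] s(2) by (auto simp: q_def)
  qed
  then show ?thesis using d(1) by blast
qed

lemma bounce_reachable:
  assumes "one_controllable L a b Gbox wall cen r" "t \<in> sphere c r" "t' \<in> sphere c r"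
  shows "(\<lambda>x y. \<exists>q. bounce x q y)\<^sup>*\<^sup>* t t'"
proof (rule rtranclp_if_locally_related[OF _ assms(2,3)])
  show "connected (sphere c r)" by (rule connected_sphere) simp
  fix t assume "t \<in> sphere c r"
  then show "\<exists>d>0. \<forall>u\<in>sphere c r. \<forall>v\<in>sphere c r. dist u t < d \<longrightarrow> dist v t < d \<longrightarrow> u \<noteq> v \<longrightarrow>
      (\<exists>q. bounce u q v)"
    using bounce_locally[OF assms(1)] by meson
qed

lemma exists_admissible_path_to_opening:
  assumes oc: "one_controllable L a b Gbox wall cen r" and t: "t \<in> sphere c r"
    and x0: "x0 = 0 \<or> x0 = L"
  shows "\<exists>ps. admissible_path L a b Gbox wall cen r ps \<and> hd ps = t \<and>
    last ps \<in> closed_segment (Complex x0 (-a)) (Complex x0 a)"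
proof -
  obtain z where z: "z \<in> closed_segment (Complex x0 (-a)) (Complex x0 a)" "z \<in> K"
    "z \<notin> corners L a b wall"
    using exists_regular_opening_point[OF x0] by blast
  have "c \<in> cball c r" using params_pos(3) by simp
  then have "z \<noteq> c" using z(2) cball_inter_frontier by blast
  then have "radial_proj c r z \<in> sphere c r" using params_pos(3) by (intro radial_proj_in_sphere) auto
  moreover have "admissible_path L a b Gbox wall cen r [radial_proj c r z, z]"
    using admissible_path_pair[OF clear_segment_radial[OF z(2)] z(3)] .
  ultimately show ?thesis
    using admissible_path_if_bounce_reachable[OF bounce_reachable[OF oc t]] z(1) by fastforce
qed

end

theorem lemma2:
  fixes L a r :: real and b :: nat and Gbox :: "complex set"
    and wall :: "nat \<Rightarrow> complex set" and cen :: "nat \<Rightarrow> complex" and rad :: "nat \<Rightarrow> real"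
    and \<theta> :: complex
  assumes "cell_geometry L a b Gbox wall cen rad r"
    and "one_controllable L a b Gbox wall cen r"
    and "\<theta> \<in> sphere (ctr L) r"
  shows "(\<exists>ps. admissible_path L a b Gbox wall cen r ps \<and> hd ps = \<theta> \<and> last ps \<in> opening_L a)
       \<and> (\<exists>ps. admissible_path L a b Gbox wall cen r ps \<and> hd ps = \<theta> \<and> last ps \<in> opening_R L a)"
proof -
  interpret billiard_cell L a b Gbox wall cen rad r by unfold_locales (rule assms(1))
  show ?thesis
    using exists_admissible_path_to_opening[OF assms(2,3), of 0]
      exists_admissible_path_to_opening[OF assms(2,3), of L]
    by (simp add: opening_L_def opening_R_def)
qed

end
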